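(* Let $L\subseteq\{a\}^*$ and let $b>0$ be an integer such that: for every $z\in L$ with $|z|\ge b$ there exist integers $p\ge 0$, $q$ with $|z|=p+q$, $0<q\le b$, and $a^{p+iq}\in L$ for all $i\ge 0$. Then for every $z\in L$ with $|z|\ge b$ there exist integers $k,p,q_0,\dots,q_k,i_0,\dots,i_k$ such that $z=a^{\,p+i_0q_0+\cdots+i_kq_k}$, where $0\le k<b$, $0\le p<b$, $0<q_j\le b$ for all $j\in\{0,\dots,k\}$, the numbers $q_0,\dots,q_k$ are pairwise distinct, and $i_j>0$ for all $j\in\{0,\dots,k\}$. In particular $z$ belongs to the language $L^{\langle p,q_0,\ldots,q_k\rangle}=\{a^{\,p+i_0q_0+\cdots+i_kq_k}\mid i_0>0,\dots,i_k>0\}$.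
   Context: $a^m$ denotes the word consisting of $m$ copies of the letter $a$; $|z|$ is the length of $z$. *)

theory Defs
  imports Main
begin

definition unary_lang :: "'a \<Rightarrow> nat \<Rightarrow> (nat \<Rightarrow> nat) \<Rightarrow> nat \<Rightarrow> 'a list set" where
  "unary_lang a p q k =
     {replicate (p + (\<Sum>j\<le>k. i j * q j)) a | i. \<forall>j\<le>k. i j > 0}"

end

theory Submission
  imports Defs
begin

text \<open>Pumping down a word of length at least b removes a block of some length q \<le> b
  and stays in L; iterating until the length drops below b writes the length as
  p + \<Sum> c q * q with p < b. The periods with c q > 0 are distinct elements of {1..b},
  so there are at most b of them, and they index the required decomposition.\<close>

lemma sum_mult_fun_upd_Suc:
  fixes c :: "'a \<Rightarrow> nat"
  assumes "finite A" "x \<in> A"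
  shows "(\<Sum>y\<in>A. (c(x := Suc (c x))) y * f y) = f x + (\<Sum>y\<in>A. c y * f y)"
proof -
  have "(\<Sum>y\<in>A. (c(x := Suc (c x))) y * f y) = Suc (c x) * f x + (\<Sum>y\<in>A - {x}. c y * f y)"
    using assms by (simp add: sum.remove)
  also have "\<dots> = f x + (\<Sum>y\<in>A. c y * f y)"
    using assms by (simp add: sum.remove)
  finally show ?thesis .
qed

lemma pumping_length_decomposition:
  fixes b :: nat
  assumes pump: "\<forall>z\<in>L. length z \<ge> b \<longrightarrow>
       (\<exists>p q :: nat. length z = p + q \<and> 0 < q \<and> q \<le> b \<and>
          (\<forall>i::nat. replicate (p + i * q) a \<in> L))"
    and "replicate n a \<in> L"
  shows "\<exists>p c. p < b \<and> n = p + (\<Sum>q\<in>{1..b}. c q * q)"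
  using assms(2)
proof (induction n rule: less_induct)
  case (less n)
  show ?case
  proof (cases "n < b")
    case True
    then show ?thesis by (intro exI[of _ n] exI[of _ "\<lambda>_. 0"]) simp
  next
    case False
    then obtain p q where pq: "n = p + q" "0 < q" "q \<le> b" "\<forall>i. replicate (p + i * q) a \<in> L"
      using pump less.prems by fastforce
    have "replicate p a \<in> L" using pq(4)[rule_format, of 0] by simp
    with less.IH[of p] pq obtain p' c where "p' < b" "p = p' + (\<Sum>r\<in>{1..b}. c r * r)"
      by auto
    moreover have "q \<in> {1..b}" using pq by auto
    ultimately show ?thesis
      using pq(1) sum_mult_fun_upd_Suc[of "{1..b}" q c id]
      by (intro exI[of _ p'] exI[of _ "c(q := Suc (c q))"]) simp
  qed
qed

lemma sum_mult_as_indexed_sum_on_support: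
  fixes c :: "'a \<Rightarrow> nat"
  assumes "finite A" and "(\<Sum>x\<in>A. c x * f x) \<noteq> 0"
  shows "\<exists>k e. k < card A \<and> inj_on e {..k} \<and> e ` {..k} \<subseteq> A \<and> (\<forall>j\<le>k. 0 < c (e j)) \<and>
           (\<Sum>x\<in>A. c x * f x) = (\<Sum>j\<le>k. c (e j) * f (e j))"
proof -
  define S where "S = {x\<in>A. c x \<noteq> 0}"
  have "finite S" "S \<subseteq> A" using assms(1) by (auto simp: S_def)
  have sum_S: "(\<Sum>x\<in>A. c x * f x) = (\<Sum>x\<in>S. c x * f x)"
    using assms(1) by (intro sum.mono_neutral_right) (auto simp: S_def)
  with assms(2) have "S \<noteq> {}" by auto
  then obtain k where k: "card S = Suc k"
    using \<open>finite S\<close> by (metis card_0_eq not0_implies_Suc)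
  obtain e where e: "bij_betw e {..k} S"
    using ex_bij_betw_nat_finite[OF \<open>finite S\<close>] by (auto simp: k atLeast0LessThan lessThan_Suc_atMost)
  have "k < card A"
    using k card_mono[OF assms(1) \<open>S \<subseteq> A\<close>] by simp
  moreover have "(\<Sum>x\<in>S. c x * f x) = (\<Sum>j\<le>k. c (e j) * f (e j))"
    using sum.reindex_bij_betw[OF e, of "\<lambda>x. c x * f x"] by simp
  ultimately show ?thesis
    using e \<open>S \<subseteq> A\<close> sum_S
    by (intro exI[of _ k] exI[of _ e]) (auto simp: bij_betw_def S_def)
qed

theorem mainTheorem3:
  fixes a :: 'a and L :: "'a list set" and b :: nat
  assumes unary: "\<forall>z\<in>L. set z \<subseteq> {a}"
    and bpos: "b > 0"
    and pump: "\<forall>z\<in>L. length z \<ge> b \<longrightarrow>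
       (\<exists>p q :: nat. length z = p + q \<and> 0 < q \<and> q \<le> b \<and>
          (\<forall>i::nat. replicate (p + i * q) a \<in> L))"
  shows "\<forall>z\<in>L. length z \<ge> b \<longrightarrow>
       (\<exists>(k::nat) (p::nat) (q::nat \<Rightarrow> nat) (i::nat \<Rightarrow> nat).
          z = replicate (p + (\<Sum>j\<le>k. i j * q j)) a \<and>
          k < b \<and> p < b \<and>
          (\<forall>j\<le>k. 0 < q j \<and> q j \<le> b) \<and>
          inj_on q {..k} \<and>
          (\<forall>j\<le>k. 0 < i j) \<and>
          z \<in> unary_lang a p q k)"
proof (intro ballI impI)
  fix z assume "z \<in> L" and "b \<le> length z"
  have z: "z = replicate (length z) a"
    using unary \<open>z \<in> L\<close> by (metis replicate_length_same singletonD subsetD)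
  then obtain p c where p: "p < b" and len: "length z = p + (\<Sum>q\<in>{1..b}. c q * q)"
    using pumping_length_decomposition[OF pump, of "length z"] \<open>z \<in> L\<close> by metis
  with \<open>b \<le> length z\<close> have "(\<Sum>q\<in>{1..b}. c q * id q) \<noteq> 0"
    by (simp del: sum_eq_0_iff)
  then obtain k e where k: "k < b" and e: "inj_on e {..k}" "e ` {..k} \<subseteq> {1..b}"
      and c_pos: "\<forall>j\<le>k. 0 < c (e j)" and sum_eq: "(\<Sum>q\<in>{1..b}. c q * q) = (\<Sum>j\<le>k. c (e j) * e j)"
    using sum_mult_as_indexed_sum_on_support[of "{1..b}" c id] by auto
  have z_eq: "z = replicate (p + (\<Sum>j\<le>k. c (e j) * e j)) a"
    using z len sum_eq by metis
  then have "z \<in> unary_lang a p e k"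
    using c_pos unfolding unary_lang_def by (intro CollectI exI[of _ "\<lambda>j. c (e j)"]) simp
  with z_eq k p e c_pos show "\<exists>k p q i. z = replicate (p + (\<Sum>j\<le>k. i j * q j)) a \<and> k < b \<and> p < b \<and>
      (\<forall>j\<le>k. 0 < q j \<and> q j \<le> b) \<and> inj_on q {..k} \<and> (\<forall>j\<le>k. 0 < i j) \<and>
      z \<in> unary_lang a p q k"
    by (intro exI[of _ k] exI[of _ p] exI[of _ e] exI[of _ "\<lambda>j. c (e j)"] conjI) auto
qed

end
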